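(* Let $n=2^\alpha\prod_{i=1}^{k}p_i^{t_i}$, where $\alpha\ge 0$ is an integer, $k\ge 1$, $p_1,\dots,p_k$ are distinct odd primes and $t_1,\dots,t_k\ge 1$ are integers. Then the lattice $\widetilde\Pi(D_n)$ contains a sublattice isomorphic to the pentagon lattice $N_5$ if and only if either $\alpha\ge 2$, or $\alpha=1$ and $k\ge 2$.
   Context: For a positive integer $n$, $D_n=\langle r,s\mid r^n=e,\ s^2=e,\ srs^{-1}=r^{-1}\rangle$ is the dihedral group of order $2n$. For a finite group $G$ and a subgroup $H\le G$, let $\pi_e(H)=\{o(x)\mid x\in H\}$. Let $\mathcal{L}(G)$ be the set of subgroups of $G$; define $H_1\equiv H_2$ iff $\pi_e(H_1)=\pi_e(H_2)$, with class $[H]$. The poset $\widetilde\Pi(G)$ is $\mathcal{L}(G)/\!\equiv$ ordered by $[H_1]\lesssim[H_2]$ iff $\pi_e(H_1)\subseteq\pi_e(H_2)$; for $G=D_n$ it is a lattice. $N_5$ is the five-element lattice $\{0,a,b,c,1\}$ with $0<a<b<1$, $0<c<1$, and $c$ incomparable to $a$ and $b$. *)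

theory Defs
  imports "HOL-Algebra.Multiplicative_Group" "HOL-Computational_Algebra.Primes"
begin

text \<open>Concrete model of the dihedral group D_n of order 2n:
  the pair (i, b) with i < n stands for r^i s^b (b = True means one factor s).
  (r^i s^b)(r^j s^c) = r^(i + (if b then -j else j)) s^(b xor c).\<close>

definition dihedral :: "nat \<Rightarrow> (nat \<times> bool) monoid" where
  "dihedral n = \<lparr> partial_object.carrier = {0..<n} \<times> UNIV,
     monoid.mult = (\<lambda>(i, b) (j, c). ((i + (if b then n - j else j)) mod n, b \<noteq> c)),
     monoid.one = (0, False) \<rparr>"

definition spec :: "('a, 'b) monoid_scheme \<Rightarrow> 'a set \<Rightarrow> nat set" where
  "spec G H = group.ord G ` H"

text \<open>The poset of equivalence classes of subgroups, represented by the set of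
  spectra, ordered by inclusion.\<close>
definition spectra :: "('a, 'b) monoid_scheme \<Rightarrow> nat set set" where
  "spectra G = {spec G H | H. subgroup H G}"

definition is_lub_in :: "'a set set \<Rightarrow> 'a set \<Rightarrow> 'a set \<Rightarrow> 'a set \<Rightarrow> bool" where
  "is_lub_in S x y u \<longleftrightarrow> u \<in> S \<and> x \<subseteq> u \<and> y \<subseteq> u \<and> (\<forall>w\<in>S. x \<subseteq> w \<and> y \<subseteq> w \<longrightarrow> u \<subseteq> w)"

definition is_glb_in :: "'a set set \<Rightarrow> 'a set \<Rightarrow> 'a set \<Rightarrow> 'a set \<Rightarrow> bool" where
  "is_glb_in S x y l \<longleftrightarrow> l \<in> S \<and> l \<subseteq> x \<and> l \<subseteq> y \<and> (\<forall>w\<in>S. w \<subseteq> x \<and> w \<subseteq> y \<longrightarrow> w \<subseteq> l)"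

datatype n5 = N0 | Na | Nb | Nc | N1

fun n5_le :: "n5 \<Rightarrow> n5 \<Rightarrow> bool" where
  "n5_le N0 _ = True"
| "n5_le _ N1 = True"
| "n5_le Na Na = True"
| "n5_le Na Nb = True"
| "n5_le Nb Nb = True"
| "n5_le Nc Nc = True"
| "n5_le _ _ = False"

definition n5_sup :: "n5 \<Rightarrow> n5 \<Rightarrow> n5" where
  "n5_sup x y = (if n5_le x y then y else if n5_le y x then x else N1)"

definition n5_inf :: "n5 \<Rightarrow> n5 \<Rightarrow> n5" where
  "n5_inf x y = (if n5_le x y then x else if n5_le y x then y else N0)"

definition has_N5_sublattice :: "'a set set \<Rightarrow> bool" where
  "has_N5_sublattice S \<longleftrightarrow> (\<exists>f. inj f \<and> (\<forall>x. f x \<in> S) \<and>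
     (\<forall>x y. is_lub_in S (f x) (f y) (f (n5_sup x y)) \<and> is_glb_in S (f x) (f y) (f (n5_inf x y))))"

end

theory Submission
  imports Defs "HOL-Number_Theory.Prime_Powers"
begin

text \<open>A subgroup of \<open>D\<^sub>n\<close> meets the rotations in a cyclic subgroup of some order \<open>m dvd n\<close>,
  whose element orders are exactly the divisors of \<open>m\<close>, and every reflection has order 2.
  So the spectra of subgroups are the sets \<open>divisors m \<union> F\<close> with \<open>m dvd n\<close> and
  \<open>F \<subseteq> {2}\<close>, and meets in this lattice are intersections.

  If \<open>n\<close> is odd or \<open>n = 2p\<^sup>t\<close>, each such set is determined by its trace on
  a set \<open>T\<close> (the prime powers, plus \<open>2p\<close> in the second case), and the trace of a join
  is the union of the traces: the lattice embeds into the distributive lattice of subsets of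
  \<open>T\<close>, so it has no pentagon. Otherwise \<open>p c dvd n\<close> for an odd prime \<open>p\<close> and an
  even \<open>c \<noteq> 2\<close> prime to \<open>p\<close> (\<open>c = 4\<close> or \<open>c = 2q\<close>), and the divisor sets of
  \<open>2\<close>, \<open>p\<close> (with \<open>2\<close> added), \<open>2p\<close>, \<open>c\<close> and \<open>pc\<close> form a pentagon.\<close>

lemma dihedral_carrier [simp]: "carrier (dihedral n) = {0..<n} \<times> UNIV"
  by (simp add: dihedral_def)

lemma dihedral_mult [simp]:
  "(i, b) \<otimes>\<^bsub>dihedral n\<^esub> (j, c) = ((i + (if b then n - j else j)) mod n, b \<noteq> c)"
  by (simp add: dihedral_def)

lemma dihedral_one [simp]: "\<one>\<^bsub>dihedral n\<^esub> = (0, False)"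
  by (simp add: dihedral_def)

lemma int_dihedral_mult_fst:
  assumes "j \<le> n"
  shows "int ((i + (if b then n - j else j)) mod n) = (int i + (if b then - int j else int j)) mod int n"
proof (cases b)
  case True
  have "int ((i + (n - j)) mod n) = (int i - int j + int n) mod int n"
    using assms by (simp add: zmod_int of_nat_diff algebra_simps)
  then show ?thesis using True by simp
qed (simp add: zmod_int)

lemma group_dihedral:
  assumes "n > 0"
  shows "group (dihedral n)"
proof (rule groupI)
  fix x y z
  assume "x \<in> carrier (dihedral n)" "y \<in> carrier (dihedral n)" "z \<in> carrier (dihedral n)"
  then obtain i b j c k d where xyz: "x = (i, b)" "y = (j, c)" "z = (k, d)" "i < n" "j < n" "k < n"
    by auto
  define jk where "jk = (j + (if c then n - k else k)) mod n"
  define ij where "ij = (i + (if b then n - j else j)) mod n"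
  have "jk \<le> n" "k \<le> n" "j \<le> n" using xyz(5,6) by (simp_all add: jk_def)
  have "int ((i + (if b then n - jk else jk)) mod n)
      = (int i + (if b then - ((int j + (if c then - int k else int k)) mod int n)
                  else (int j + (if c then - int k else int k)) mod int n)) mod int n"
    using int_dihedral_mult_fst[OF \<open>jk \<le> n\<close>, of i b] int_dihedral_mult_fst[OF \<open>k \<le> n\<close>, of j c]
    by (simp add: jk_def)
  also have "\<dots> = ((int i + (if b then - int j else int j)) mod int n
                    + (if b \<noteq> c then - int k else int k)) mod int n"
    by (cases b; cases c) (simp_all add: mod_simps algebra_simps)
  also have "\<dots> = int ((ij + (if b \<noteq> c then n - k else k)) mod n)"
    using int_dihedral_mult_fst[OF \<open>k \<le> n\<close>, of ij "b \<noteq> c"] int_dihedral_mult_fst[OF \<open>j \<le> n\<close>, of i b]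
    by (simp add: ij_def)
  finally have "(i + (if b then n - jk else jk)) mod n = (ij + (if b \<noteq> c then n - k else k)) mod n"
    by (simp only: of_nat_eq_iff)
  then show "x \<otimes>\<^bsub>dihedral n\<^esub> y \<otimes>\<^bsub>dihedral n\<^esub> z = x \<otimes>\<^bsub>dihedral n\<^esub> (y \<otimes>\<^bsub>dihedral n\<^esub> z)"
    unfolding xyz(1-3) dihedral_mult jk_def[symmetric] ij_def[symmetric] by auto
next
  fix x assume "x \<in> carrier (dihedral n)"
  then obtain i b where x: "x = (i, b)" "i < n" by auto
  show "\<exists>y\<in>carrier (dihedral n). y \<otimes>\<^bsub>dihedral n\<^esub> x = \<one>\<^bsub>dihedral n\<^esub>"
  proof (cases b)
    case True
    then show ?thesis using x by (intro bexI[of _ "(i, True)"]) auto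
  next
    case False
    then show ?thesis using x assms
      by (intro bexI[of _ "((n - i) mod n, False)"]) (auto simp: mod_add_left_eq)
  qed
qed (use assms in auto)

lemma dihedral_rotation_pow:
  assumes "i < n"
  shows "(i, False) [^]\<^bsub>dihedral n\<^esub> (k::nat) = ((k * i) mod n, False)"
  using assms by (induction k) (simp_all add: mod_add_right_eq add.commute)

lemma dvd_mult_iff_div_gcd_dvd:
  fixes n i k :: nat
  assumes "n > 0"
  shows "n dvd k * i \<longleftrightarrow> n div gcd n i dvd k"
proof -
  define g where "g = gcd n i"
  have "g > 0" using assms by (simp add: g_def)
  obtain a b where ab: "n = a * g" "i = b * g" "coprime a b"
    using gcd_coprime_exists[of n i] \<open>g > 0\<close> unfolding g_def by auto
  have "n dvd k * i \<longleftrightarrow> a * g dvd (k * b) * g"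
    by (simp only: ab mult.assoc)
  also have "\<dots> \<longleftrightarrow> a dvd k"
    using \<open>g > 0\<close> ab(3) by (simp add: coprime_dvd_mult_left_iff)
  also have "a = n div g"
    using ab(1) \<open>g > 0\<close> by simp
  finally show ?thesis by (simp only: g_def)
qed

lemma dihedral_ord_rotation:
  assumes "i < n"
  shows "group.ord (dihedral n) (i, False) = n div gcd n i"
proof -
  interpret group "dihedral n" using group_dihedral assms by simp
  have "ord (i, False) dvd k \<longleftrightarrow> n div gcd n i dvd k" for k
    using pow_eq_id[of "(i, False)" k] dvd_mult_iff_div_gcd_dvd[of n k i] assms
    by (simp add: dihedral_rotation_pow mod_eq_0_iff_dvd)
  then show ?thesis by (meson dvd_antisym dvd_refl)
qed

lemma dihedral_ord_reflection:
  assumes "i < n"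
  shows "group.ord (dihedral n) (i, True) = 2"
proof -
  interpret group "dihedral n" using group_dihedral assms by simp
  have "(i, True) [^]\<^bsub>dihedral n\<^esub> (2::nat) = \<one>\<^bsub>dihedral n\<^esub>"
    using assms by (simp add: numeral_2_eq_2)
  then have "ord (i, True) dvd 2" using pow_eq_id[of "(i, True)"] assms by simp
  moreover have "ord (i, True) \<noteq> 1"
    using pow_eq_id[of "(i, True)" 1] assms by auto
  ultimately show ?thesis using prime_nat_iff[of 2] by auto
qed

lemma dihedral_inv:
  assumes "i < n"
  shows "inv\<^bsub>dihedral n\<^esub> (i, b) = (if b then (i, True) else ((n - i) mod n, False))"
proof -
  interpret group "dihedral n" using group_dihedral assms by simp
  show ?thesis
    using assms by (intro inv_equality) (auto simp: mod_add_left_eq)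
qed

lemma subgroup_dihedral_multiples:
  assumes "g dvd n" "n > 0"
  shows "subgroup {(i, b). i < n \<and> g dvd i \<and> (b \<longrightarrow> r)} (dihedral n)"
proof -
  interpret group "dihedral n" using group_dihedral assms by simp
  show ?thesis
  proof (rule subgroupI)
    fix x assume "x \<in> {(i, b). i < n \<and> g dvd i \<and> (b \<longrightarrow> r)}"
    then show "inv\<^bsub>dihedral n\<^esub> x \<in> {(i, b). i < n \<and> g dvd i \<and> (b \<longrightarrow> r)}"
      using assms by (auto simp: dihedral_inv dvd_mod split: if_splits)
  next
    fix x y
    assume "x \<in> {(i, b). i < n \<and> g dvd i \<and> (b \<longrightarrow> r)}"
      and "y \<in> {(i, b). i < n \<and> g dvd i \<and> (b \<longrightarrow> r)}"
    then show "x \<otimes>\<^bsub>dihedral n\<^esub> y \<in> {(i, b). i < n \<and> g dvd i \<and> (b \<longrightarrow> r)}"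
      using assms by (auto simp: dvd_mod)
  qed (use assms in auto)
qed

lemma spec_dihedral:
  assumes "H \<subseteq> carrier (dihedral n)"
  shows "spec (dihedral n) H
       = (\<lambda>i. n div gcd n i) ` {i. (i, False) \<in> H} \<union> (if \<exists>i. (i, True) \<in> H then {2} else {})"
proof -
  let ?R = "{i. (i, False) \<in> H}" and ?S = "{i. (i, True) \<in> H}"
  have lt: "i < n" if "(i, b) \<in> H" for i b using assms that by auto
  have "H = (\<lambda>i. (i, False)) ` ?R \<union> (\<lambda>i. (i, True)) ` ?S"
  proof (intro equalityI subsetI)
    fix x assume "x \<in> H"
    moreover obtain i b where "x = (i, b)" by fastforce
    ultimately show "x \<in> (\<lambda>i. (i, False)) ` ?R \<union> (\<lambda>i. (i, True)) ` ?S"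
      by (cases b) auto
  qed auto
  then have "spec (dihedral n) H
      = group.ord (dihedral n) ` (\<lambda>i. (i, False)) ` ?R \<union> group.ord (dihedral n) ` (\<lambda>i. (i, True)) ` ?S"
    unfolding spec_def by (metis image_Un)
  moreover have "group.ord (dihedral n) ` (\<lambda>i. (i, False)) ` ?R = (\<lambda>i. n div gcd n i) ` ?R"
    unfolding image_image using lt by (intro image_cong) (auto simp: dihedral_ord_rotation)
  moreover have "group.ord (dihedral n) ` (\<lambda>i. (i, True)) ` ?S = (if ?S = {} then {} else {2})"
    unfolding image_image using lt by (auto simp: dihedral_ord_reflection)
  ultimately show ?thesis by simp
qed

lemma mod_add_closed_eq_multiples:
  fixes n :: nat and R :: "nat set"
  assumes "n > 0" "R \<subseteq> {..<n}" "0 \<in> R"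
    and add_closed: "\<And>i j. i \<in> R \<Longrightarrow> j \<in> R \<Longrightarrow> (i + j) mod n \<in> R"
  obtains g where "g dvd n" "R = {i. i < n \<and> g dvd i}"
proof -
  have mult_closed: "(c * x) mod n \<in> R" if "x mod n \<in> R" for c x
  proof (induction c)
    case 0
    show ?case using \<open>0 \<in> R\<close> by simp
  next
    case (Suc c)
    have "(Suc c * x) mod n = (x mod n + (c * x) mod n) mod n" by (simp add: mod_add_eq)
    then show ?case using add_closed[OF that Suc] by simp
  qed
  define g where "g = (LEAST g. 0 < g \<and> g mod n \<in> R)"
  have n_witness: "0 < n \<and> n mod n \<in> R" using assms by simp
  then have g: "0 < g" "g mod n \<in> R"
    unfolding g_def by (metis (mono_tags, lifting) LeastI)+
  have "g \<le> n" unfolding g_def by (rule Least_le) (fact n_witness)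
  have g_dvd: "g dvd x" if "x mod n \<in> R" for x
  proof (rule ccontr)
    assume "\<not> g dvd x"
    define y where "y = x div g * g"
    \<comment> \<open>\<open>x mod g = x - y\<close> is congruent to \<open>x + (n - 1) * y\<close> modulo \<open>n\<close>\<close>
    have "x + (n - 1) * y = x mod g + n * y"
      using \<open>n > 0\<close> div_mult_mod_eq[of x g] by (cases n) (auto simp: y_def algebra_simps)
    have "y mod n \<in> R" unfolding y_def using g(2) by (rule mult_closed)
    then have "((n - 1) * y) mod n \<in> R" by (rule mult_closed)
    then have "(x mod n + ((n - 1) * y) mod n) mod n \<in> R" using that by (intro add_closed)
    also have "(x mod n + ((n - 1) * y) mod n) mod n = (x + (n - 1) * y) mod n"
      by (simp add: mod_add_eq)
    also have "\<dots> = (x mod g) mod n"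
      using \<open>x + (n - 1) * y = x mod g + n * y\<close> by simp
    finally have "(x mod g) mod n \<in> R" .
    moreover have "0 < x mod g" "x mod g < g"
      using \<open>\<not> g dvd x\<close> g(1) by (simp_all add: mod_greater_zero_iff_not_dvd)
    ultimately show False
      using not_less_Least[of "x mod g" "\<lambda>g. 0 < g \<and> g mod n \<in> R"] unfolding g_def[symmetric] by blast
  qed
  show thesis
  proof
    show "g dvd n" using g_dvd[of n] \<open>0 \<in> R\<close> by simp
    show "R = {i. i < n \<and> g dvd i}"
    proof (intro equalityI subsetI)
      fix i assume "i \<in> R"
      then show "i \<in> {i. i < n \<and> g dvd i}" using assms(2) g_dvd[of i] by auto
    next
      fix i assume "i \<in> {i. i < n \<and> g dvd i}"
      then show "i \<in> R" using mult_closed[OF g(2), of "i div g"] by auto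
    qed
  qed
qed

definition divisors :: "nat \<Rightarrow> nat set" where
  "divisors m = {d. d dvd m}"

lemma mem_divisors [simp]: "d \<in> divisors m \<longleftrightarrow> d dvd m"
  by (simp add: divisors_def)

lemma divisors_subset_iff: "divisors a \<subseteq> divisors b \<longleftrightarrow> a dvd b"
  by (meson dvd_refl dvd_trans mem_divisors subset_iff)

lemma divisors_psubset_iff: "divisors a \<subset> divisors b \<longleftrightarrow> a dvd b \<and> \<not> b dvd a"
  by (simp add: less_le_not_le divisors_subset_iff)

lemma divisors_Int: "divisors a \<inter> divisors b = divisors (gcd a b)"
  by auto

lemma divisors_2: "divisors 2 = {1, 2}"
  using prime_nat_iff[of 2] by auto

lemma div_gcd_image_lessThan:
  fixes m :: nat
  assumes "m > 0"
  shows "(\<lambda>c. m div gcd m c) ` {..<m} = divisors m"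
proof (intro equalityI subsetI)
  fix d assume "d \<in> (\<lambda>c. m div gcd m c) ` {..<m}"
  then show "d \<in> divisors m"
    by auto (metis dvd_div_mult_self dvd_triv_left gcd_dvd1)
next
  fix d assume "d \<in> divisors m"
  then obtain e where e: "m = d * e" by auto
  then have "gcd m (e mod m) = e"
    using gcd_red_nat[of e m] by (simp add: gcd.commute)
  moreover have "m div e = d" using e assms by simp
  ultimately show "d \<in> (\<lambda>c. m div gcd m c) ` {..<m}"
    using assms by (intro image_eqI[of _ _ "e mod m"]) auto
qed

lemma div_gcd_image_multiples:
  fixes n g :: nat
  assumes "n > 0" "g dvd n"
  shows "(\<lambda>i. n div gcd n i) ` {i. i < n \<and> g dvd i} = divisors (n div g)"
proof -
  obtain m where n: "n = g * m" using assms(2) by blast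
  have "g > 0" "m > 0" using assms n by auto
  have "{i. i < n \<and> g dvd i} = (\<lambda>c. g * c) ` {..<m}"
  proof (intro equalityI subsetI)
    fix i assume "i \<in> {i. i < n \<and> g dvd i}"
    then obtain c where "i = g * c" "c < m" using n by auto
    then show "i \<in> (\<lambda>c. g * c) ` {..<m}" by blast
  qed (use n \<open>g > 0\<close> in auto)
  moreover have "n div gcd n (g * c) = m div gcd m c" for c
    by (simp only: n gcd_mult_distrib_nat[symmetric]) (use \<open>g > 0\<close> in simp)
  moreover have "n div g = m" using n \<open>g > 0\<close> by simp
  ultimately show ?thesis
    using div_gcd_image_lessThan[OF \<open>m > 0\<close>] by (simp add: image_image)
qed

definition divisor_spectra :: "nat \<Rightarrow> nat set set" where
  "divisor_spectra n = {divisors m \<union> F | m F. m dvd n \<and> F \<subseteq> {2}}"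

lemma divisor_spectraI: "m dvd n \<Longrightarrow> F \<subseteq> {2} \<Longrightarrow> divisors m \<union> F \<in> divisor_spectra n"
  unfolding divisor_spectra_def by blast

lemma divisor_spectraE:
  assumes "X \<in> divisor_spectra n"
  obtains m F where "m dvd n" "F \<subseteq> {2}" "X = divisors m \<union> F"
  using assms unfolding divisor_spectra_def by blast

lemma spectra_dihedral:
  assumes "n > 0"
  shows "spectra (dihedral n) = divisor_spectra n"
proof (intro equalityI subsetI)
  fix X assume "X \<in> spectra (dihedral n)"
  then obtain H where H: "subgroup H (dihedral n)" "X = spec (dihedral n) H"
    by (auto simp: spectra_def)
  obtain g where g: "g dvd n" "{i. (i, False) \<in> H} = {i. i < n \<and> g dvd i}"
  proof (rule mod_add_closed_eq_multiples[OF assms])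
    show "{i. (i, False) \<in> H} \<subseteq> {..<n}" using subgroup.subset[OF H(1)] by auto
    show "0 \<in> {i. (i, False) \<in> H}" using subgroup.one_closed[OF H(1)] by simp
    show "(i + j) mod n \<in> {i. (i, False) \<in> H}"
      if "i \<in> {i. (i, False) \<in> H}" "j \<in> {i. (i, False) \<in> H}" for i j
      using subgroup.m_closed[OF H(1), of "(i, False)" "(j, False)"] that by simp
  qed
  have "X = divisors (n div g) \<union> (if \<exists>i. (i, True) \<in> H then {2} else {})"
    using H spec_dihedral[OF subgroup.subset[OF H(1)]] g div_gcd_image_multiples[OF assms g(1)]
    by simp
  moreover have "n div g dvd n" using g(1) by (metis dvd_div_mult_self dvd_triv_left)
  ultimately show "X \<in> divisor_spectra n"
    using divisor_spectraI[of "n div g" n "if \<exists>i. (i, True) \<in> H then {2} else {}"] by simp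
next
  fix X assume "X \<in> divisor_spectra n"
  then obtain m F where mF: "m dvd n" "F \<subseteq> {2}" "X = divisors m \<union> F"
    by (rule divisor_spectraE)
  define H where "H = {(i, b). i < n \<and> n div m dvd i \<and> (b \<longrightarrow> F \<noteq> {})}"
  have "n div m dvd n" "n div (n div m) = m"
    using mF(1) assms by (auto elim!: dvdE)
  then have "subgroup H (dihedral n)"
    unfolding H_def using assms by (intro subgroup_dihedral_multiples)
  moreover have "spec (dihedral n) H = X"
    using spec_dihedral[OF subgroup.subset[OF \<open>subgroup H (dihedral n)\<close>]]
      div_gcd_image_multiples[OF assms \<open>n div m dvd n\<close>] \<open>n div (n div m) = m\<close> mF(2,3) assms
    by (auto simp: H_def)
  ultimately show "X \<in> spectra (dihedral n)"
    unfolding spectra_def by blast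
qed

lemma not_has_N5_sublattice_if_trace_embedding:
  fixes S :: "'a set set" and T :: "'a set"
  assumes inj: "inj_on (\<lambda>X. X \<inter> T) S"
    and join: "\<And>X Y. X \<in> S \<Longrightarrow> Y \<in> S \<Longrightarrow> \<exists>W\<in>S. X \<subseteq> W \<and> Y \<subseteq> W \<and> W \<inter> T \<subseteq> X \<union> Y"
    and meet: "\<And>X Y. X \<in> S \<Longrightarrow> Y \<in> S \<Longrightarrow> X \<inter> Y \<in> S"
  shows "\<not> has_N5_sublattice S"
proof
  assume "has_N5_sublattice S"
  then obtain f where f: "inj f" "\<And>x. f x \<in> S"
    "\<And>x y. is_lub_in S (f x) (f y) (f (n5_sup x y))" "\<And>x y. is_glb_in S (f x) (f y) (f (n5_inf x y))"
    unfolding has_N5_sublattice_def by blast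
  have lub_trace: "U \<inter> T = (X \<union> Y) \<inter> T" if U: "is_lub_in S X Y U" and XY: "X \<in> S" "Y \<in> S" for X Y U
  proof -
    obtain W where "W \<in> S" "X \<subseteq> W" "Y \<subseteq> W" "W \<inter> T \<subseteq> X \<union> Y" using join[OF XY] by blast
    then show ?thesis using U unfolding is_lub_in_def by blast
  qed
  have glb_eq: "L = X \<inter> Y" if "is_glb_in S X Y L" "X \<in> S" "Y \<in> S" for X Y L
    using that meet[OF that(2,3)] unfolding is_glb_in_def by blast
  have "f Na \<subseteq> f Nb"
    using f(3)[of Na Nb] by (simp add: n5_sup_def is_lub_in_def)
  moreover have "(f Na \<union> f Nc) \<inter> T = (f Nb \<union> f Nc) \<inter> T"
    using lub_trace[OF f(3)[of Na Nc]] lub_trace[OF f(3)[of Nb Nc]] f(2) by (simp add: n5_sup_def)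
  moreover have "f Na \<inter> f Nc = f Nb \<inter> f Nc"
    using glb_eq[OF f(4)[of Na Nc]] glb_eq[OF f(4)[of Nb Nc]] f(2) by (simp add: n5_inf_def)
  ultimately have "f Na \<inter> T = f Nb \<inter> T" by blast
  then have "f Na = f Nb" using inj f(2) by (meson inj_onD)
  with f(1) show False by (simp add: inj_eq)
qed

lemma has_N5_sublatticeI:
  fixes S :: "'a set set"
  assumes mem: "z \<in> S" "a \<in> S" "b \<in> S" "c \<in> S" "u \<in> S"
    and chain: "z \<subset> a" "a \<subset> b" "b \<subset> u" "z \<subset> c" "c \<subset> u"
    and meet: "a \<inter> c = z" "b \<inter> c = z"
    and join: "\<And>w. w \<in> S \<Longrightarrow> a \<subseteq> w \<Longrightarrow> c \<subseteq> w \<Longrightarrow> u \<subseteq> w"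
  shows "has_N5_sublattice S"
proof -
  define f where "f x = (case x of N0 \<Rightarrow> z | Na \<Rightarrow> a | Nb \<Rightarrow> b | Nc \<Rightarrow> c | N1 \<Rightarrow> u)" for x
  have f_mono: "f x \<subseteq> f y \<longleftrightarrow> n5_le x y" for x y
    using chain meet by (cases x; cases y) (auto simp: f_def)
  have join_b: "u \<subseteq> w" if "w \<in> S" "b \<subseteq> w" "c \<subseteq> w" for w
    using join[OF that(1) _ that(3)] that(2) chain(2) by blast
  have f_mem: "f x \<in> S" for x
    using mem by (cases x) (simp_all add: f_def)
  have "inj f"
  proof (rule injI)
    fix x y assume "f x = f y"
    then show "x = y" using f_mono[of x y] f_mono[of y x] by (cases x; cases y) simp_all
  qed
  moreover have "is_lub_in S (f x) (f y) (f (n5_sup x y)) \<and> is_glb_in S (f x) (f y) (f (n5_inf x y))"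
    for x y
  proof (cases "n5_le x y \<or> n5_le y x")
    case True
    then show ?thesis using f_mono[of x y] f_mono[of y x] f_mem
      by (auto simp: n5_sup_def n5_inf_def is_lub_in_def is_glb_in_def)
  next
    case False
    then have sup_inf: "n5_sup x y = N1" "n5_inf x y = N0"
      by (auto simp: n5_sup_def n5_inf_def)
    have incl: "a \<subseteq> u" "b \<subseteq> u" "c \<subseteq> u"
      using chain by auto
    from False consider "x = Na" "y = Nc" | "x = Nc" "y = Na" | "x = Nb" "y = Nc" | "x = Nc" "y = Nb"
      by (cases x; cases y) auto
    then show ?thesis
      using sup_inf incl mem meet join join_b by cases (auto simp: f_def is_lub_in_def is_glb_in_def)
  qed
  ultimately show ?thesis
    unfolding has_N5_sublattice_def using f_mem by blast
qed

lemma divisor_spectra_normalE: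
  assumes "X \<in> divisor_spectra n"
  obtains m F where "m dvd n" "m \<noteq> 2" "F \<subseteq> {2}" "X = divisors m \<union> F"
proof -
  obtain m F where mF: "m dvd n" "F \<subseteq> {2}" "X = divisors m \<union> F"
    using assms by (rule divisor_spectraE)
  show thesis
  proof (cases "m = 2")
    case True
    have "X = divisors 1 \<union> {2}" using True mF(2,3) by (auto simp: divisors_2)
    then show thesis using that[of 1 "{2}"] by simp
  qed (use mF that in blast)
qed

lemma divisor_spectra_Int:
  assumes "X \<in> divisor_spectra n" "Y \<in> divisor_spectra n"
  shows "X \<inter> Y \<in> divisor_spectra n"
proof -
  obtain m1 F1 where X: "m1 dvd n" "F1 \<subseteq> {2}" "X = divisors m1 \<union> F1"
    using assms(1) by (rule divisor_spectraE)
  obtain m2 F2 where Y: "m2 dvd n" "F2 \<subseteq> {2}" "Y = divisors m2 \<union> F2"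
    using assms(2) by (rule divisor_spectraE)
  have "X \<inter> Y = divisors (gcd m1 m2) \<union> ({2} \<inter> X \<inter> Y)"
    using X(2,3) Y(2,3) by auto
  moreover have "gcd m1 m2 dvd n"
    using X(1) by (meson dvd_trans gcd_dvd1)
  ultimately show ?thesis
    using divisor_spectraI[of "gcd m1 m2" n "{2} \<inter> X \<inter> Y"] by auto
qed

lemma primepow_dvd_lcmD:
  fixes q a b :: nat
  assumes "primepow q" "q dvd lcm a b"
  shows "q dvd a \<or> q dvd b"
proof (cases "a = 0 \<or> b = 0")
  case False
  obtain p e where q: "prime p" "q = p ^ e"
    using assms(1) by (auto simp: primepow_def)
  have "\<not> is_unit p" using prime_gt_1_nat[OF q(1)] by simp
  have "e \<le> multiplicity p (lcm a b)"
    using assms(2) False \<open>\<not> is_unit p\<close> q(2) by (simp add: power_dvd_iff_le_multiplicity)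
  also have "\<dots> = max (multiplicity p a) (multiplicity p b)"
    using False q(1) by (simp add: multiplicity_lcm)
  finally show ?thesis
    using False \<open>\<not> is_unit p\<close> q(2) by (auto simp: power_dvd_iff_le_multiplicity max_def split: if_splits)
qed auto

lemma dvd_if_primepow_dvd:
  fixes x y :: nat
  assumes "x \<noteq> 0" and primepow_dvd: "\<And>q. primepow q \<Longrightarrow> q dvd x \<Longrightarrow> q dvd y"
  shows "x dvd y"
proof (cases "y = 0")
  case False
  show ?thesis
  proof (rule multiplicity_le_imp_dvd[OF assms(1)])
    fix p :: nat assume "prime p"
    then have "\<not> is_unit p" using prime_gt_1_nat[OF \<open>prime p\<close>] by simp
    show "multiplicity p x \<le> multiplicity p y"
    proof (cases "multiplicity p x = 0")
      case False
      then have "p ^ multiplicity p x dvd y"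
        using \<open>prime p\<close> by (intro primepow_dvd) (auto simp: multiplicity_dvd)
      then show ?thesis
        using \<open>y \<noteq> 0\<close> \<open>\<not> is_unit p\<close> by (simp add: power_dvd_iff_le_multiplicity)
    qed simp
  qed
qed simp

text \<open>The element \<open>2\<close> of a spectrum does not reveal whether \<open>2\<close> divides \<open>m\<close>;
  an even divisor of \<open>m\<close> other than \<open>2\<close> must be visible in \<open>T\<close> instead.\<close>

lemma divisor_spectra_subset_if_trace_subset:
  assumes "n > 0" "Collect primepow \<subseteq> T"
    and even_witness: "\<And>d. d dvd n \<Longrightarrow> even d \<Longrightarrow> d \<noteq> 2 \<Longrightarrow> \<exists>c\<in>T. even c \<and> c \<noteq> 2 \<and> c dvd d"
    and "X \<in> divisor_spectra n" "Y \<in> divisor_spectra n" "X \<inter> T \<subseteq> Y"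
  shows "X \<subseteq> Y"
proof
  obtain m1 F1 where X: "m1 dvd n" "F1 \<subseteq> {2}" "X = divisors m1 \<union> F1"
    using assms(4) by (rule divisor_spectraE)
  obtain m2 F2 where Y: "m2 dvd n" "F2 \<subseteq> {2}" "Y = divisors m2 \<union> F2"
    using assms(5) by (rule divisor_spectraE)
  have "primepow (2::nat)" by simp
  have dvd_m2: "q dvd m2" if "q dvd m1" "q \<in> T" "q \<noteq> 2" for q
    using that X(3) Y(2,3) assms(6) by auto
  fix d assume "d \<in> X"
  show "d \<in> Y"
  proof (cases "d = 2")
    case True
    then show ?thesis using \<open>d \<in> X\<close> \<open>primepow 2\<close> assms(2,6) by blast
  next
    case False
    then have "d dvd m1" using \<open>d \<in> X\<close> X(2,3) by auto
    have "d dvd m2"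
    proof (rule dvd_if_primepow_dvd)
      show "d \<noteq> 0" using dvd_trans[OF \<open>d dvd m1\<close> X(1)] \<open>n > 0\<close> by auto
      fix q assume "primepow q" "q dvd d"
      then have q: "q dvd m1" "q \<in> T" using \<open>d dvd m1\<close> assms(2) by (auto intro: dvd_trans)
      show "q dvd m2"
      proof (cases "q = 2")
        case True
        then obtain c where c: "c \<in> T" "even c" "c \<noteq> 2" "c dvd d"
          using even_witness[of d] \<open>q dvd d\<close> \<open>d dvd m1\<close> X(1) \<open>d \<noteq> 2\<close> by (auto intro: dvd_trans)
        then have "c dvd m2" using \<open>d dvd m1\<close> by (auto intro: dvd_m2 dvd_trans)
        then show ?thesis using True c(2) by (auto intro: dvd_trans)
      qed (use q dvd_m2 in blast)
    qed
    then show ?thesis using Y(3) by simp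
  qed
qed

text \<open>The join of \<open>divisors m\<^sub>1 \<union> F\<^sub>1\<close> and \<open>divisors m\<^sub>2 \<union> F\<^sub>2\<close> lies below
  \<open>divisors (lcm m\<^sub>1 m\<^sub>2) \<union> F\<^sub>1 \<union> F\<^sub>2\<close>, which gains no new elements of \<open>T\<close> by the
  hypothesis on \<open>lcm\<close>. The parameter \<open>2\<close> is excluded there since
  \<open>divisors 2 \<union> F = divisors 1 \<union> {2}\<close>, whereas \<open>2p\<close> divides \<open>lcm 2 p\<close>.\<close>

lemma not_has_N5_divisor_spectra:
  assumes "n > 0" "Collect primepow \<subseteq> T"
    and even_witness: "\<And>d. d dvd n \<Longrightarrow> even d \<Longrightarrow> d \<noteq> 2 \<Longrightarrow> \<exists>c\<in>T. even c \<and> c \<noteq> 2 \<and> c dvd d"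
    and lcm_split: "\<And>m1 m2 q. m1 dvd n \<Longrightarrow> m2 dvd n \<Longrightarrow> m1 \<noteq> 2 \<Longrightarrow> m2 \<noteq> 2 \<Longrightarrow> q \<in> T \<Longrightarrow>
      q dvd lcm m1 m2 \<Longrightarrow> q dvd m1 \<or> q dvd m2"
  shows "\<not> has_N5_sublattice (divisor_spectra n)"
proof (rule not_has_N5_sublattice_if_trace_embedding)
  show "inj_on (\<lambda>X. X \<inter> T) (divisor_spectra n)"
    using divisor_spectra_subset_if_trace_subset[OF assms(1,2) even_witness]
    by (intro inj_onI) (metis Int_lower1 equalityI le_infE)
next
  fix X Y assume "X \<in> divisor_spectra n" "Y \<in> divisor_spectra n"
  then show "X \<inter> Y \<in> divisor_spectra n" by (rule divisor_spectra_Int)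
next
  fix X Y assume "X \<in> divisor_spectra n" "Y \<in> divisor_spectra n"
  then obtain m1 F1 m2 F2 where
    X: "m1 dvd n" "m1 \<noteq> 2" "F1 \<subseteq> {2}" "X = divisors m1 \<union> F1" and
    Y: "m2 dvd n" "m2 \<noteq> 2" "F2 \<subseteq> {2}" "Y = divisors m2 \<union> F2"
    by (metis divisor_spectra_normalE)
  define W where "W = divisors (lcm m1 m2) \<union> (F1 \<union> F2)"
  have "W \<in> divisor_spectra n"
    unfolding W_def using X(1,3) Y(1,3) by (intro divisor_spectraI) auto
  moreover have "X \<subseteq> W" "Y \<subseteq> W"
    using X(4) Y(4) by (auto simp: W_def intro: dvd_trans)
  moreover have "W \<inter> T \<subseteq> X \<union> Y"
  proof
    fix q assume "q \<in> W \<inter> T"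
    then show "q \<in> X \<union> Y"
      using lcm_split[OF X(1) Y(1) X(2) Y(2), of q] X(4) Y(4) by (auto simp: W_def)
  qed
  ultimately show "\<exists>W\<in>divisor_spectra n. X \<subseteq> W \<and> Y \<subseteq> W \<and> W \<inter> T \<subseteq> X \<union> Y"
    by blast
qed

lemma not_has_N5_divisor_spectra_odd:
  assumes "odd n"
  shows "\<not> has_N5_sublattice (divisor_spectra n)"
proof (rule not_has_N5_divisor_spectra[where T = "Collect primepow"])
  show "n > 0" using assms by (auto intro: Nat.gr0I)
  show "\<exists>c\<in>Collect primepow. even c \<and> c \<noteq> 2 \<and> c dvd d" if "d dvd n" "even d" "d \<noteq> 2" for d
    using that assms by (auto intro: dvd_trans)
qed (auto dest: primepow_dvd_lcmD)

lemma even_dvd_twice_prime_power: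
  fixes p d t :: nat
  assumes "prime p" "d dvd 2 * p ^ t" "even d" "d \<noteq> 2"
  shows "2 * p dvd d"
proof -
  obtain e where d: "d = 2 * e" using assms(3) by blast
  then have "e dvd p ^ t" using assms(2) by simp
  then obtain j where "e = p ^ j" using divides_primepow_nat[OF assms(1)] by blast
  moreover have "j \<noteq> 0" using \<open>e = p ^ j\<close> d assms(4) by auto
  ultimately show ?thesis using d by simp
qed

lemma not_has_N5_divisor_spectra_twice_prime_power:
  fixes p t :: nat
  assumes "prime p"
  shows "\<not> has_N5_sublattice (divisor_spectra (2 * p ^ t))"
proof (rule not_has_N5_divisor_spectra[where T = "Collect primepow \<union> {2 * p}"])
  have "p > 1" using assms by (rule prime_gt_1_nat)
  show "2 * p ^ t > 0" using assms by (simp add: prime_gt_0_nat)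
  show "Collect primepow \<subseteq> Collect primepow \<union> {2 * p}" by blast
  show "\<exists>c\<in>Collect primepow \<union> {2 * p}. even c \<and> c \<noteq> 2 \<and> c dvd d"
    if "d dvd 2 * p ^ t" "even d" "d \<noteq> 2" for d
    using even_dvd_twice_prime_power[OF assms that] \<open>p > 1\<close> by auto
  show "q dvd m1 \<or> q dvd m2"
    if m: "m1 dvd 2 * p ^ t" "m2 dvd 2 * p ^ t" "m1 \<noteq> 2" "m2 \<noteq> 2"
      and q: "q \<in> Collect primepow \<union> {2 * p}" "q dvd lcm m1 m2" for m1 m2 q
  proof (cases "q = 2 * p")
    case True
    then have "2 dvd lcm m1 m2" using q(2) by (meson dvd_mult_left dvd_trans)
    then have "even m1 \<or> even m2"
      using primepow_dvd_lcmD[of 2] by simp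
    then show ?thesis
      using even_dvd_twice_prime_power[OF assms] m True by blast
  qed (use q primepow_dvd_lcmD in auto)
qed

lemma has_N5_divisor_spectra:
  fixes n p c :: nat
  assumes "n > 0" "prime p" "even c" "c \<noteq> 2" "coprime p c" "p * c dvd n"
  shows "has_N5_sublattice (divisor_spectra n)"
proof -
  have "p > 1" using assms(2) by (rule prime_gt_1_nat)
  have "p \<noteq> 2" using assms(3,5) by auto
  have "c > 0" using assms(1,6) by (auto intro: Nat.gr0I)
  have "\<not> c dvd 2" using assms(3,4) \<open>c > 0\<close> divisors_2 by (auto simp: set_eq_iff)
  have "gcd (2 * p) c = 2"
  proof -
    obtain e where "c = 2 * e" using assms(3) by blast
    moreover have "coprime p e" using assms(5) \<open>c = 2 * e\<close> by simp
    ultimately show ?thesis by (simp add: gcd_mult_distrib_nat[symmetric] coprime_iff_gcd_eq_1)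
  qed
  have "c dvd n" "p dvd n" "2 * p dvd n"
    using assms(3,6) by (auto intro: dvd_trans simp: mult.commute)
  show ?thesis
  proof (rule has_N5_sublatticeI[where z = "divisors 2" and a = "divisors p \<union> {2}"
        and b = "divisors (2 * p)" and c = "divisors c" and u = "divisors (p * c)"])
    show "divisors 2 \<in> divisor_spectra n" "divisors p \<union> {2} \<in> divisor_spectra n"
      "divisors (2 * p) \<in> divisor_spectra n" "divisors c \<in> divisor_spectra n"
      "divisors (p * c) \<in> divisor_spectra n"
      using divisor_spectraI[of _ n "{}"] divisor_spectraI[of p n "{2}"] \<open>c dvd n\<close> \<open>p dvd n\<close>
        \<open>2 * p dvd n\<close> assms(3,6) by (auto intro: dvd_trans)
    show "divisors 2 \<subset> divisors p \<union> {2}"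
      using \<open>p > 1\<close> \<open>p \<noteq> 2\<close> by (auto simp: divisors_2)
    show "divisors p \<union> {2} \<subset> divisors (2 * p)"
    proof
      show "divisors p \<union> {2} \<subseteq> divisors (2 * p)" by auto
      show "divisors p \<union> {2} \<noteq> divisors (2 * p)"
      proof
        assume eq: "divisors p \<union> {2} = divisors (2 * p)"
        have "2 * p \<in> divisors (2 * p)" by simp
        then have "2 * p \<in> divisors p \<union> {2}" by (simp only: eq)
        then show False using \<open>p > 1\<close> by (auto dest: dvd_imp_le)
      qed
    qed
    have "2 * p dvd p * c" "\<not> p * c dvd 2 * p"
      using assms(3) \<open>\<not> c dvd 2\<close> \<open>p > 1\<close> by (auto simp: mult.commute[of 2 p])
    then show "divisors (2 * p) \<subset> divisors (p * c)"
      by (simp add: divisors_psubset_iff)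
    show "divisors 2 \<subset> divisors c"
      using assms(3) \<open>\<not> c dvd 2\<close> by (simp add: divisors_psubset_iff)
    have "\<not> p * c dvd c"
      using \<open>c > 0\<close> \<open>p > 1\<close> dvd_imp_le[of "p * c" c] by simp
    then show "divisors c \<subset> divisors (p * c)"
      by (simp add: divisors_psubset_iff)
    show "(divisors p \<union> {2}) \<inter> divisors c = divisors 2"
      using assms(3) coprime_common_divisor_nat[OF assms(5)] by (auto simp: divisors_2)
    show "divisors (2 * p) \<inter> divisors c = divisors 2"
      by (simp add: divisors_Int \<open>gcd (2 * p) c = 2\<close>)
    fix W assume W: "W \<in> divisor_spectra n" "divisors p \<union> {2} \<subseteq> W" "divisors c \<subseteq> W"
    then obtain m F where mF: "F \<subseteq> {2}" "W = divisors m \<union> F" by (auto elim: divisor_spectraE)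
    have "p \<in> W" "c \<in> W" using W(2,3) by auto
    then have "p dvd m" "c dvd m" using mF \<open>p \<noteq> 2\<close> assms(4) by auto
    then have "p * c dvd m" using assms(5) by (simp add: divides_mult)
    then show "divisors (p * c) \<subseteq> W" using mF by (auto intro: dvd_trans)
  qed
qed

lemma has_N5_divisor_spectra_four:
  fixes n p :: nat
  assumes "n > 0" "prime p" "odd p" "4 * p dvd n"
  shows "has_N5_sublattice (divisor_spectra n)"
  using has_N5_divisor_spectra[OF assms(1,2), of 4] coprime_mult_right_iff[of p 2 2] assms(3,4)
  by (simp add: mult.commute)

lemma has_N5_divisor_spectra_two_primes:
  fixes n p q :: nat
  assumes "n > 0" "prime p" "prime q" "odd p" "p \<noteq> q" "2 * p * q dvd n"
  shows "has_N5_sublattice (divisor_spectra n)"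
  using has_N5_divisor_spectra[OF assms(1,2), of "2 * q"] primes_coprime[OF assms(2,3,5)]
    prime_gt_1_nat[OF assms(3)] assms(4,6)
  by (simp add: ac_simps)

lemma odd_prime_powers_prod:
  fixes p t :: "nat \<Rightarrow> nat"
  assumes "finite I" "\<forall>i\<in>I. prime (p i) \<and> odd (p i) \<and> t i \<ge> 1"
  shows "odd (\<Prod>i\<in>I. p i ^ t i)" and "i \<in> I \<Longrightarrow> p i dvd (\<Prod>i\<in>I. p i ^ t i)"
proof -
  show "odd (\<Prod>i\<in>I. p i ^ t i)"
    using assms by (simp add: even_prod_iff)
  assume "i \<in> I"
  then have "t i > 0" using assms(2) by auto
  then have "p i dvd p i ^ t i" by (simp add: dvd_power)
  also have "\<dots> dvd (\<Prod>i\<in>I. p i ^ t i)" using assms(1) \<open>i \<in> I\<close> by (rule dvd_prodI)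
  finally show "p i dvd (\<Prod>i\<in>I. p i ^ t i)" .
qed

theorem theorem2p9:
  fixes n \<alpha> k :: nat and p t :: "nat \<Rightarrow> nat"
  assumes "k \<ge> 1"
    and "\<forall>i\<in>{1..k}. prime (p i) \<and> odd (p i) \<and> t i \<ge> 1"
    and "inj_on p {1..k}"
    and "n = 2 ^ \<alpha> * (\<Prod>i=1..k. p i ^ t i)"
  shows "has_N5_sublattice (spectra (dihedral n)) \<longleftrightarrow> (\<alpha> \<ge> 2 \<or> (\<alpha> = 1 \<and> k \<ge> 2))"
proof -
  define P where "P = (\<Prod>i=1..k. p i ^ t i)"
  have "odd P" and p_dvd: "\<And>i. i \<in> {1..k} \<Longrightarrow> p i dvd P"
    unfolding P_def using odd_prime_powers_prod[OF finite_atLeastAtMost assms(2)] by blast+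
  have "n > 0" using odd_pos[OF \<open>odd P\<close>] assms(4) by (simp add: P_def)
  have p1: "prime (p 1)" "odd (p 1)" "p 1 dvd P" using assms(1,2) p_dvd by auto
  consider "\<alpha> = 0" | "\<alpha> = 1" "k = 1" | "\<alpha> \<ge> 2" | "\<alpha> = 1" "k \<ge> 2"
    using assms(1) by linarith
  then have "has_N5_sublattice (divisor_spectra n) \<longleftrightarrow> (\<alpha> \<ge> 2 \<or> (\<alpha> = 1 \<and> k \<ge> 2))"
  proof cases
    case 1
    then show ?thesis using not_has_N5_divisor_spectra_odd \<open>odd P\<close> assms(4) by (simp add: P_def)
  next
    case 2
    then show ?thesis using not_has_N5_divisor_spectra_twice_prime_power[OF p1(1)] assms(4) by simp
  next
    case 3
    have "4 * p 1 dvd n"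
      using mult_dvd_mono[OF le_imp_power_dvd[OF 3, of "2::nat"] p1(3)] assms(4) by (simp add: P_def)
    then show ?thesis using has_N5_divisor_spectra_four[OF \<open>n > 0\<close> p1(1,2)] 3 by simp
  next
    case 4
    have "prime (p 2)" "p 2 dvd P" "p 1 \<noteq> p 2"
      using assms(2,3) p_dvd 4 by (auto dest: inj_onD)
    then have "2 * p 1 * p 2 dvd n"
      using p1 4 assms(4) primes_coprime[OF p1(1)] by (auto simp: P_def divides_mult mult.assoc)
    then show ?thesis
      using has_N5_divisor_spectra_two_primes[OF \<open>n > 0\<close> p1(1) \<open>prime (p 2)\<close> p1(2) \<open>p 1 \<noteq> p 2\<close>] 4
      by simp
  qed
  then show ?thesis using spectra_dihedral[OF \<open>n > 0\<close>] by simp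
qed

end
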